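(* Let $n\geq 3$ be odd. Then \[ \mu^-(A_{n+1}) \leq \mu^-(A_n) \quad\text{and}\quad \mu^+(A_{n+1}) \leq \mu^+(A_n). \]
   Context: All graphs are simple; eigenvalues of a graph are those of its $(0,1)$-adjacency matrix. For a graph $G$, $\mu^-(G)$ denotes the largest eigenvalue of $G$ that is less than $-1$, and $\mu^+(G)$ denotes the smallest positive eigenvalue of $G$. Threshold graphs from binary strings: given $b=b_1b_2\cdots b_n\in\{0,1\}^n$ with $b_1=0$, let $G_1$ be a single vertex $v_1$, and for $j=2,\ldots,n$ obtain $G_j$ from $G_{j-1}$ by adding a new vertex $v_j$ which is adjacent to all previous vertices if $b_j=1$ and isolated if $b_j=0$; $G(b)=G_n$. The anti-regular graph $A_n$ is the threshold graph $G(b)$ with $b=0101\cdots01$ (length $n$) when $n$ is even and $b=00101\cdots01$ (length $n$) when $n$ is odd. *)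

theory Defs
  imports "Jordan_Normal_Form.Char_Poly"
begin

text \<open>Threshold graph from a binary string b = b_1 ... b_n, represented 0-indexed as a
  list of booleans (True = 1). Vertex v_(k+1) is index k. For i < j, v_i ~ v_j iff b_j = 1.\<close>

definition threshold_adj :: "bool list \<Rightarrow> nat \<Rightarrow> nat \<Rightarrow> bool" where
  "threshold_adj b i j = (i \<noteq> j \<and> b ! (max i j))"

definition adj_matrix :: "bool list \<Rightarrow> real mat" where
  "adj_matrix b = mat (length b) (length b) (\<lambda>(i,j). if threshold_adj b i j then 1 else 0)"

definition antireg_string :: "nat \<Rightarrow> bool list" where
  "antireg_string n =
     (if even n then map (\<lambda>k. odd k) [0..<n]
      else map (\<lambda>k. k \<noteq> 0 \<and> even k) [0..<n])"

definition antireg_adj :: "nat \<Rightarrow> real mat" where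
  "antireg_adj n = adj_matrix (antireg_string n)"

definition mu_minus :: "real mat \<Rightarrow> real" where
  "mu_minus A = Max {x. eigenvalue A x \<and> x < -1}"

definition mu_plus :: "real mat \<Rightarrow> real" where
  "mu_plus A = Min {x. eigenvalue A x \<and> x > 0}"

end

theory Submission
  imports Defs
begin

(* Let l be an eigenvalue other than 0 and -1. Subtracting the eigen-equations of vertices two
   steps apart in 0101...01 shows that an eigenvector is determined by its first entry through
   a two-term recurrence, whose even-indexed entries satisfy the Chebyshev recurrence at
   cheb_arg l = 1/(2 l (l+1)) - 1; in A_(2k+1) the first two vertices are twins, which only
   changes the initial value. So the eigenvalues of A_(2k+1) and A_(2k+2) outside {0, -1} are
   the zeros of odd_char k and even_char k, combinations of U_k and U_(k-1) at cheb_arg l, and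
     even_char = (1 - 1/l) odd_char + U_(k-1) / l^2.
   On (0, 1/5] and [-6/5, -1) we have cheb_arg l >= 1, so odd_char > 0 there, while
   even_char (1/5) < 0. The smallest positive root and the largest root below -1 of odd_char
   lie where U_(k-1) (cheb_arg l) > 0, so even_char is positive at them. Hence even_char
   vanishes between 1/5 and the smallest positive root of odd_char, and somewhere below the
   largest root of odd_char under -1, but by the same identity nowhere between that root
   and -1. *)

section \<open>Eigen-equations of threshold graphs\<close>

definition threshold_mult :: "(nat \<Rightarrow> bool) \<Rightarrow> nat \<Rightarrow> (nat \<Rightarrow> real) \<Rightarrow> nat \<Rightarrow> real" where
  "threshold_mult \<beta> m x i =
     (if \<beta> i then \<Sum>j<i. x j else 0) + (\<Sum>j = Suc i..<m. if \<beta> j then x j else 0)"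

lemma adj_matrix_mult_vec:
  assumes "length b = m" and "\<forall>j<m. b ! j = \<beta> j" and "i < m"
  shows "(adj_matrix b *\<^sub>v vec m x) $ i = threshold_mult \<beta> m x i"
proof -
  let ?a = "\<lambda>j. (if threshold_adj b i j then 1 else 0) * x j"
  have "(adj_matrix b *\<^sub>v vec m x) $ i = sum ?a {0..<m}"
    using assms(1,3) by (simp add: adj_matrix_def scalar_prod_def)
  also have "\<dots> = sum ?a {0..<Suc i} + sum ?a {Suc i..<m}"
    using assms(3) by (intro sum.atLeastLessThan_concat [symmetric]) auto
  also have "sum ?a {0..<Suc i} = sum ?a {..<i}"
    by (simp add: atLeast0LessThan threshold_adj_def)
  finally show ?thesis
    using assms(2,3) unfolding threshold_mult_def
    by (auto simp: threshold_adj_def max_def intro!: sum.cong)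
qed

lemma eigenvalue_adj_matrix_iff:
  assumes "length b = m" and "\<forall>j<m. b ! j = \<beta> j"
  shows "eigenvalue (adj_matrix b) l \<longleftrightarrow>
    (\<exists>x. (\<exists>i<m. x i \<noteq> 0) \<and> (\<forall>i<m. l * x i = threshold_mult \<beta> m x i))"
proof -
  have dim: "adj_matrix b \<in> carrier_mat m m"
    using assms(1) by (simp add: adj_matrix_def)
  have vec_iff: "(\<exists>v \<in> carrier_vec m. P v) \<longleftrightarrow> (\<exists>x. P (vec m x))" for P
    by (metis carrier_vecD eq_vecI index_vec vec_carrier)
  have "eigenvalue (adj_matrix b) l \<longleftrightarrow>
      (\<exists>v \<in> carrier_vec m. v \<noteq> 0\<^sub>v m \<and> adj_matrix b *\<^sub>v v = l \<cdot>\<^sub>v v)"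
    using dim by (auto simp: eigenvalue_def eigenvector_def)
  also have "\<dots> \<longleftrightarrow> (\<exists>x. vec m x \<noteq> 0\<^sub>v m \<and> adj_matrix b *\<^sub>v vec m x = l \<cdot>\<^sub>v vec m x)"
    by (rule vec_iff)
  also have "\<dots> \<longleftrightarrow> (\<exists>x. (\<exists>i<m. x i \<noteq> 0) \<and> (\<forall>i<m. l * x i = threshold_mult \<beta> m x i))"
  proof -
    have mv: "adj_matrix b *\<^sub>v vec m x = l \<cdot>\<^sub>v vec m x \<longleftrightarrow> (\<forall>i<m. l * x i = threshold_mult \<beta> m x i)" for x
      using dim adj_matrix_mult_vec[OF assms] by (auto simp: vec_eq_iff simp del: index_mult_mat_vec)
    have nz: "vec m x \<noteq> 0\<^sub>v m \<longleftrightarrow> (\<exists>i<m. x i \<noteq> 0)" for x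
      by (auto simp: vec_eq_iff)
    show ?thesis
      by (simp only: mv nz)
  qed
  finally show ?thesis .
qed

lemma finite_eigenvalues_adj_matrix: "finite {l. eigenvalue (adj_matrix b) l}"
proof -
  have A: "adj_matrix b \<in> carrier_mat (length b) (length b)"
    by (simp add: adj_matrix_def)
  have "char_poly (adj_matrix b) \<noteq> 0"
    using degree_monic_char_poly[OF A] by auto
  then show ?thesis
    using poly_roots_finite by (simp add: eigenvalue_root_char_poly[OF A])
qed

lemma threshold_mult_Suc:
  "threshold_mult \<beta> (Suc m) x (Suc i) =
     threshold_mult (\<lambda>j. \<beta> (Suc j)) m (\<lambda>j. x (Suc j)) i + (if \<beta> (Suc i) then x 0 else 0)"
  unfolding threshold_mult_def sum.lessThan_Suc_shift sum.shift_bounds_Suc_ivl by simp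

lemma threshold_mult_odd_0:
  assumes "1 < m"
  shows "threshold_mult odd m y 1 - threshold_mult odd m y 0 = y 0 - y 1"
  using assms by (simp add: threshold_mult_def sum.atLeast_Suc_lessThan)

lemma threshold_mult_odd_two_step:
  assumes "i + 2 < m"
  shows "threshold_mult odd m y (i + 2) - threshold_mult odd m y i =
    (if odd i then y i + y (i + 1) - y (i + 2) else - y (i + 1))"
  using assms by (simp add: threshold_mult_def sum.atLeast_Suc_lessThan)

lemma threshold_mult_odd_last: "threshold_mult odd (2 * k + 2) y (2 * k) = y (2 * k + 1)"
  by (simp add: threshold_mult_def)

lemma all_eq_zero_iff_two_step:
  fixes D :: "nat \<Rightarrow> 'a :: zero"
  assumes "2 \<le> m"
  shows "(\<forall>i<m. D i = 0) \<longleftrightarrow>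
    D 1 = D 0 \<and> (\<forall>i. i + 2 < m \<longrightarrow> D (i + 2) = D i) \<and> D (m - 2) = 0"
proof
  assume "D 1 = D 0 \<and> (\<forall>i. i + 2 < m \<longrightarrow> D (i + 2) = D i) \<and> D (m - 2) = 0"
  then have step: "D 1 = D 0" "\<And>i. i + 2 < m \<Longrightarrow> D (i + 2) = D i" and last: "D (m - 2) = 0"
    by auto
  have const: "i < m \<longrightarrow> D i = D 0" for i
    by (induction i rule: nat_induct2) (use step in auto)
  show "\<forall>i<m. D i = 0"
  proof (intro allI impI)
    fix i assume "i < m"
    with const have "D i = D 0" by blast
    also have "\<dots> = D (m - 2)"
      using const[of "m - 2"] assms by simp
    finally show "D i = 0" using last by simp
  qed
qed (use assms in auto)

section \<open>Anti-regular graphs and a two-term recurrence\<close>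

definition alt_step :: "real \<Rightarrow> nat \<Rightarrow> real \<Rightarrow> real \<Rightarrow> real" where
  "alt_step l i u v = (if even i then u - v / l else u + v / (l + 1))"

(* The entries of a solution of the eigen-equations for l, normalised by y 0 = 1, y 1 = q. *)
fun alt_seq :: "real \<Rightarrow> real \<Rightarrow> nat \<Rightarrow> real" where
  "alt_seq l q 0 = 1"
| "alt_seq l q (Suc 0) = q"
| "alt_seq l q (Suc (Suc i)) = alt_step l i (alt_seq l q i) (alt_seq l q (Suc i))"

lemma alt_step_scale: "alt_step l i (c * u) (c * v) = c * alt_step l i u v"
  by (simp add: alt_step_def algebra_simps)

lemma alt_seq_unique:
  assumes "y 1 = q * y 0"
    and "\<And>i. i + 2 < m \<Longrightarrow> y (i + 2) = alt_step l i (y i) (y (i + 1))"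
  shows "i < m \<Longrightarrow> y i = y 0 * alt_seq l q i"
proof (induction i rule: less_induct)
  case (less i)
  consider "i = 0" | "i = 1" | j where "i = j + 2"
    by (metis One_nat_def add_2_eq_Suc' not0_implies_Suc)
  then show ?case
  proof cases
    case 3
    then have "y i = alt_step l j (y j) (y (j + 1))"
      using assms(2) less.prems by simp
    also have "\<dots> = alt_step l j (y 0 * alt_seq l q j) (y 0 * alt_seq l q (j + 1))"
      using less.IH[of j] less.IH[of "j + 1"] less.prems 3 by simp
    also have "\<dots> = y 0 * alt_seq l q i"
      using 3 by (simp add: alt_step_scale)
    finally show ?thesis .
  qed (use assms(1) in auto)
qed

(* The eigen-equations of the threshold graph 0101...01 on m vertices, with the first vertex
   counted 1 + a times; a = 1 accounts for the twin first vertex of A_(2k+3). *)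
definition alt_eigen_eqs :: "real \<Rightarrow> real \<Rightarrow> nat \<Rightarrow> (nat \<Rightarrow> real) \<Rightarrow> bool" where
  "alt_eigen_eqs a l m y \<longleftrightarrow>
     (\<forall>i<m. l * y i = threshold_mult odd m y i + (if odd i then a * y 0 else 0))"

lemma alt_eigen_eqs_iff_recurrence:
  fixes a l :: real
  assumes "l \<noteq> 0" and "l \<noteq> -1"
  shows "alt_eigen_eqs a l (2*k+2) y \<longleftrightarrow> y 1 = (l + 1 + a) / (l + 1) * y 0
    \<and> (\<forall>i. i + 2 < 2*k+2 \<longrightarrow> y (i + 2) = alt_step l i (y i) (y (i + 1)))
    \<and> alt_step l (2*k) (y (2*k)) (y (2*k+1)) = 0"
proof -
  define m where "m = 2*k+2"
  have l1: "l + 1 \<noteq> 0"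
    using assms(2) by simp
  define D where "D i = l * y i - threshold_mult odd m y i - (if odd i then a * y 0 else 0)" for i
  have "D 1 - D 0 = (l + 1) * y 1 - (l + 1 + a) * y 0"
    using threshold_mult_odd_0[of m y] by (simp add: D_def m_def algebra_simps)
  then have "D 1 = D 0 \<longleftrightarrow> y 1 = (l + 1 + a) / (l + 1) * y 0"
    using l1 by (auto simp: field_simps)
  moreover have "D (i + 2) = D i \<longleftrightarrow> y (i + 2) = alt_step l i (y i) (y (i + 1))"
    if "i + 2 < m" for i
  proof -
    have "D (i + 2) - D i = (if odd i then (l + 1) * (y (i + 2) - y i) - y (i + 1)
        else l * (y (i + 2) - y i) + y (i + 1))"
      using threshold_mult_odd_two_step[OF that, of y] by (simp add: D_def algebra_simps)
    then show ?thesis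
      using assms l1 by (auto simp: alt_step_def field_simps)
  qed
  moreover have "D (m - 2) = l * alt_step l (2*k) (y (2*k)) (y (2*k+1))"
    using assms(1) threshold_mult_odd_last[of k y]
    by (simp add: D_def m_def alt_step_def algebra_simps)
  moreover have "alt_eigen_eqs a l m y \<longleftrightarrow> (\<forall>i<m. D i = 0)"
    by (simp add: alt_eigen_eqs_def D_def diff_eq_eq ac_simps)
  ultimately show ?thesis
    using all_eq_zero_iff_two_step[of m D] assms(1) by (auto simp: m_def)
qed

lemma alt_eigen_eqs_solvable_iff:
  fixes a l :: real
  assumes "l \<noteq> 0" and "l \<noteq> -1"
  shows "(\<exists>y. (\<exists>i<2*k+2. y i \<noteq> 0) \<and> alt_eigen_eqs a l (2*k+2) y)
    \<longleftrightarrow> alt_seq l ((l + 1 + a) / (l + 1)) (2*k+2) = 0"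
proof -
  define q where "q = (l + 1 + a) / (l + 1)"
  note recurrence = alt_eigen_eqs_iff_recurrence[OF assms, of a k, folded q_def]
  show ?thesis
    unfolding q_def [symmetric]
  proof
    assume "\<exists>y. (\<exists>i<2*k+2. y i \<noteq> 0) \<and> alt_eigen_eqs a l (2*k+2) y"
    then obtain y i0 where i0: "i0 < 2*k+2" "y i0 \<noteq> 0" and eqs: "alt_eigen_eqs a l (2*k+2) y"
      by blast
    have y: "y i = y 0 * alt_seq l q i" if "i < 2*k+2" for i
      using alt_seq_unique[of y q "2*k+2" l i] that eqs recurrence by blast
    have "y 0 \<noteq> 0"
      using y[OF i0(1)] i0(2) by auto
    moreover have "y 0 * alt_seq l q (2*k+2) = alt_step l (2*k) (y (2*k)) (y (2*k+1))"
      using y[of "2*k"] y[of "2*k+1"] by (simp add: alt_step_scale)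
    ultimately show "alt_seq l q (2*k+2) = 0"
      using eqs recurrence by simp
  next
    assume "alt_seq l q (2*k+2) = 0"
    then have "alt_eigen_eqs a l (2*k+2) (alt_seq l q)"
      using recurrence[of "alt_seq l q"] by (simp add: numeral_2_eq_2)
    then show "\<exists>y. (\<exists>i<2*k+2. y i \<noteq> 0) \<and> alt_eigen_eqs a l (2*k+2) y"
      by (intro exI[of _ "alt_seq l q"]) auto
  qed
qed

lemma threshold_eigen_twin_reduction:
  fixes l :: real
  assumes "l \<noteq> 0" and "1 \<le> m"
  shows "(\<exists>x. (\<exists>i<Suc m. x i \<noteq> 0) \<and>
      (\<forall>i<Suc m. l * x i = threshold_mult (\<lambda>i. i \<noteq> 0 \<and> even i) (Suc m) x i))
    \<longleftrightarrow> (\<exists>y. (\<exists>i<m. y i \<noteq> 0) \<and> alt_eigen_eqs 1 l m y)"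
proof -
  let ?\<beta> = "\<lambda>i::nat. i \<noteq> 0 \<and> even i"
  have shift: "threshold_mult ?\<beta> (Suc m) x (Suc i) =
      threshold_mult odd m (\<lambda>j. x (Suc j)) i + (if odd i then x 0 else 0)" for x i
    using threshold_mult_Suc[of ?\<beta> m x i] by simp
  have twin: "threshold_mult ?\<beta> (Suc m) x 0 = threshold_mult ?\<beta> (Suc m) x 1" for x
  proof -
    have "{Suc 0..<Suc m} = insert (Suc 0) {Suc (Suc 0)..<Suc m}"
      using assms(2) by auto
    then show ?thesis
      by (simp add: threshold_mult_def)
  qed
  show ?thesis
  proof
    assume "\<exists>x. (\<exists>i<Suc m. x i \<noteq> 0) \<and> (\<forall>i<Suc m. l * x i = threshold_mult ?\<beta> (Suc m) x i)"
    then obtain x where nz: "\<exists>i<Suc m. x i \<noteq> 0"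
      and eqs: "\<forall>i<Suc m. l * x i = threshold_mult ?\<beta> (Suc m) x i"
      by blast
    have "l * x 0 = l * x 1"
      using eqs twin[of x] assms(2) by auto
    then have x01: "x 1 = x 0"
      using assms(1) by simp
    have "alt_eigen_eqs 1 l m (\<lambda>j. x (Suc j))"
      using eqs shift x01 by (auto simp: alt_eigen_eqs_def)
    moreover have "\<exists>i<m. x (Suc i) \<noteq> 0"
    proof (cases "x 0 = 0")
      case True
      then show ?thesis
        using nz by (auto simp: Ex_less_Suc2)
    next
      case False
      then show ?thesis
        using x01 assms(2) by (intro exI[of _ 0]) auto
    qed
    ultimately show "\<exists>y. (\<exists>i<m. y i \<noteq> 0) \<and> alt_eigen_eqs 1 l m y"
      by (intro exI[of _ "\<lambda>j. x (Suc j)"]) simp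
  next
    assume "\<exists>y. (\<exists>i<m. y i \<noteq> 0) \<and> alt_eigen_eqs 1 l m y"
    then obtain y where nz: "\<exists>i<m. y i \<noteq> 0" and eqs: "alt_eigen_eqs 1 l m y"
      by blast
    define x where "x i = (case i of 0 \<Rightarrow> y 0 | Suc j \<Rightarrow> y j)" for i
    have x_Suc: "(\<lambda>j. x (Suc j)) = y"
      by (simp add: x_def)
    have rest: "\<forall>i<m. l * x (Suc i) = threshold_mult ?\<beta> (Suc m) x (Suc i)"
    proof (intro allI impI)
      fix i assume "i < m"
      then have "l * x (Suc i) = threshold_mult odd m y i + (if odd i then x 0 else 0)"
        using eqs by (simp add: alt_eigen_eqs_def x_def)
      then show "l * x (Suc i) = threshold_mult ?\<beta> (Suc m) x (Suc i)"
        by (simp only: shift x_Suc)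
    qed
    moreover have "l * x 0 = threshold_mult ?\<beta> (Suc m) x 0"
      using rest assms(2) twin[of x] by (auto simp: x_def)
    moreover have "\<exists>i<Suc m. x i \<noteq> 0"
      using nz by (auto simp: Ex_less_Suc2 x_def)
    ultimately show "\<exists>x. (\<exists>i<Suc m. x i \<noteq> 0) \<and>
        (\<forall>i<Suc m. l * x i = threshold_mult ?\<beta> (Suc m) x i)"
      by (auto simp: All_less_Suc2)
  qed
qed

lemma antireg_string_even:
  "length (antireg_string (2*k+2)) = 2*k+2" "\<forall>i<2*k+2. antireg_string (2*k+2) ! i = odd i"
  by (auto simp: antireg_string_def simp del: upt_Suc)

lemma antireg_string_odd:
  "length (antireg_string (2*k+3)) = Suc (2*k+2)"
  "\<forall>i<Suc (2*k+2). antireg_string (2*k+3) ! i = (i \<noteq> 0 \<and> even i)"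
  by (auto simp: antireg_string_def simp del: upt_Suc)

lemma eigenvalue_antireg_even_iff_alt_seq:
  assumes "l \<noteq> 0" and "l \<noteq> -1"
  shows "eigenvalue (antireg_adj (2*k+2)) l \<longleftrightarrow> alt_seq l 1 (2*k+2) = 0"
proof -
  have eqs: "(\<forall>i<2*k+2. l * x i = threshold_mult odd (2*k+2) x i) \<longleftrightarrow>
      alt_eigen_eqs 0 l (2*k+2) x" for x
    by (auto simp: alt_eigen_eqs_def)
  have q: "(l + 1 + 0) / (l + 1) = 1"
    using assms(2) by simp
  show ?thesis
    by (simp only: antireg_adj_def eigenvalue_adj_matrix_iff[OF antireg_string_even] eqs
        alt_eigen_eqs_solvable_iff[OF assms] q)
qed

lemma eigenvalue_antireg_odd_iff_alt_seq:
  assumes "l \<noteq> 0" and "l \<noteq> -1"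
  shows "eigenvalue (antireg_adj (2*k+3)) l \<longleftrightarrow> alt_seq l ((l + 2) / (l + 1)) (2*k+2) = 0"
proof -
  have q: "(l + 1 + 1) / (l + 1) = (l + 2) / (l + 1)"
    by (simp add: add.assoc)
  have "1 \<le> 2*k+2"
    by simp
  then show ?thesis
    by (simp only: antireg_adj_def eigenvalue_adj_matrix_iff[OF antireg_string_odd]
        threshold_eigen_twin_reduction[OF assms(1)] alt_eigen_eqs_solvable_iff[OF assms] q)
qed

lemma finite_eigenvalues_antireg: "finite {l. eigenvalue (antireg_adj n) l}"
  unfolding antireg_adj_def by (rule finite_eigenvalues_adj_matrix)

section \<open>Chebyshev polynomials of the second kind\<close>

(* cheb c n is U_(n-1)(c). *)
fun cheb :: "real \<Rightarrow> nat \<Rightarrow> real" where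
  "cheb c 0 = 0"
| "cheb c (Suc 0) = 1"
| "cheb c (Suc (Suc n)) = 2 * c * cheb c (Suc n) - cheb c n"

lemma cheb_linear_rec:
  assumes "\<And>t. x (Suc (Suc t)) = 2 * c * x (Suc t) - x t"
  shows "x (Suc t) = x 1 * cheb c (Suc t) - x 0 * cheb c t"
proof -
  have "x (Suc t) = x 1 * cheb c (Suc t) - x 0 * cheb c t \<and>
      x (Suc (Suc t)) = x 1 * cheb c (Suc (Suc t)) - x 0 * cheb c (Suc t)"
  proof (induction t)
    case 0
    then show ?case
      using assms[of 0] by simp
  next
    case (Suc t)
    have x3: "x (Suc (Suc (Suc t))) = 2 * c * x (Suc (Suc t)) - x (Suc t)"
      by (rule assms)
    have c3: "cheb c (Suc (Suc (Suc t))) = 2 * c * cheb c (Suc (Suc t)) - cheb c (Suc t)"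
      by (rule cheb.simps(3))
    from Suc.IH have x1: "x (Suc t) = x 1 * cheb c (Suc t) - x 0 * cheb c t"
      and x2: "x (Suc (Suc t)) = x 1 * cheb c (Suc (Suc t)) - x 0 * cheb c (Suc t)"
      by auto
    show ?case
      unfolding x3 c3 x1 x2 by (simp add: algebra_simps)
  qed
  then show ?thesis ..
qed

lemma cheb_cos: "cheb (cos p) n * sin p = sin (real n * p)"
proof -
  have trig: "2 * cos p * sin a - sin (a - p) = sin (a + p)" for a
    by (simp add: sin_add sin_diff algebra_simps)
  have "cheb (cos p) n * sin p = sin (real n * p) \<and>
      cheb (cos p) (Suc n) * sin p = sin (real (Suc n) * p)"
  proof (induction n)
    case (Suc n)
    let ?a = "real (Suc n) * p"
    have "real n * p = ?a - p" and "real (Suc (Suc n)) * p = ?a + p"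
      by (simp_all add: algebra_simps)
    moreover have "cheb (cos p) (Suc (Suc n)) * sin p =
        2 * cos p * (cheb (cos p) (Suc n) * sin p) - cheb (cos p) n * sin p"
      by (simp add: algebra_simps)
    ultimately show ?case
      using Suc.IH trig[of ?a] by simp
  qed simp
  then show ?thesis ..
qed

lemma cheb_growth:
  assumes "1 \<le> c"
  shows "real n \<le> cheb c n \<and> cheb c n + 1 \<le> cheb c (Suc n)"
proof (induction n)
  case (Suc n)
  then have "0 \<le> cheb c (Suc n)"
    by linarith
  then have "2 * cheb c (Suc n) \<le> 2 * c * cheb c (Suc n)"
    using assms by (simp add: mult_right_mono)
  moreover have "cheb c (Suc (Suc n)) = 2 * c * cheb c (Suc n) - cheb c n"
    by simp
  ultimately show ?case
    using Suc.IH of_nat_Suc[of n] by linarith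
qed simp

lemma cheb_pos:
  assumes "1 \<le> k" and "cos (pi / real k) < c"
  shows "0 < cheb c k"
proof (cases "1 \<le> c")
  case True
  then show ?thesis
    using cheb_growth[of c k] assms(1) by simp
next
  case False
  have k: "0 < pi / real k" "pi / real k \<le> pi"
    using assms(1) by (auto simp: field_simps)
  have "-1 < c"
    using assms(2) cos_ge_minus_one[of "pi / real k"] by linarith
  define p where "p = arccos c"
  have p: "0 < p" "cos p = c"
    using \<open>-1 < c\<close> False arccos_lt_bounded[of c] by (auto simp: p_def)
  have "p < arccos (cos (pi / real k))"
    unfolding p_def using \<open>-1 < c\<close> False assms(2) by (intro arccos_less_arccos) auto
  then have "p < pi / real k"
    using k by (simp add: arccos_cos)
  then have "real k * p < pi"
    using assms(1) by (simp add: field_simps)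
  moreover have "1 * p \<le> real k * p"
    using assms(1) p(1) by (intro mult_right_mono) auto
  ultimately have "p < pi"
    by linarith
  then have "0 < sin p" "0 < sin (real k * p)"
    using p(1) \<open>real k * p < pi\<close> assms(1) by (auto intro!: sin_gt_zero)
  then show ?thesis
    using cheb_cos[of p k] p(2) by (metis zero_less_mult_pos2)
qed

lemma cheb_cos_pi_div:
  assumes "2 \<le> k"
  shows "cheb (cos (pi / real k)) k = 0" and "cheb (cos (pi / real k)) (Suc k) = -1"
proof -
  let ?p = "pi / real k"
  have "0 < sin ?p"
    using assms by (intro sin_gt_zero) (auto simp: field_simps)
  moreover have "real k * ?p = pi" and "real (Suc k) * ?p = ?p + pi"
    using assms by (simp_all add: field_simps)
  ultimately have "cheb (cos ?p) k * sin ?p = 0" and "(cheb (cos ?p) (Suc k) + 1) * sin ?p = 0"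
    using cheb_cos[of ?p k] cheb_cos[of ?p "Suc k"] by (simp_all add: distrib_right)
  then show "cheb (cos ?p) k = 0" and "cheb (cos ?p) (Suc k) = -1"
    using \<open>0 < sin ?p\<close> by simp_all
qed

lemma continuous_on_cheb:
  assumes "continuous_on S f"
  shows "continuous_on S (\<lambda>x. cheb (f x) n)"
proof -
  have "continuous_on S (\<lambda>x. cheb (f x) n) \<and> continuous_on S (\<lambda>x. cheb (f x) (Suc n))"
    by (induction n) (auto intro!: continuous_intros assms)
  then show ?thesis ..
qed

section \<open>The characteristic functions of anti-regular graphs\<close>

definition cheb_arg :: "real \<Rightarrow> real" where
  "cheb_arg l = 1 / (2 * l * (l + 1)) - 1"

definition odd_char :: "nat \<Rightarrow> real \<Rightarrow> real" where
  "odd_char k l = cheb (cheb_arg l) (Suc k) + (1 + 1 / l) * cheb (cheb_arg l) k"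

definition even_char :: "nat \<Rightarrow> real \<Rightarrow> real" where
  "even_char k l = (1 - 1 / l) * cheb (cheb_arg l) (Suc k) + cheb (cheb_arg l) k"

lemma two_cheb_arg: "2 * cheb_arg l = 1 / (l * (l + 1)) - 2"
  by (simp add: cheb_arg_def mult.assoc)

lemma alt_seq_cheb:
  "alt_seq l q (2*t+2) = (-1) ^ t * ((1 - q / l) * cheb (cheb_arg l) (Suc t) + cheb (cheb_arg l) t)"
proof -
  define P where "P t = (-1) ^ t * alt_seq l q (2*t)" for t
  have step: "alt_seq l q (Suc (Suc (Suc (Suc n)))) =
      2 * alt_seq l q (Suc (Suc n)) - alt_seq l q n - alt_seq l q (Suc (Suc n)) / (l * (l + 1))"
    if "even n" for n
    using that by (simp add: alt_step_def add_divide_distrib divide_divide_eq_left algebra_simps)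
  have idx: "2 * Suc t = Suc (Suc (2 * t))" for t
    by simp
  have "P (Suc (Suc t)) = (1 / (l * (l + 1)) - 2) * P (Suc t) - P t" for t
    unfolding P_def idx step[OF dvd_triv_left] by (simp del: alt_seq.simps add: algebra_simps)
  then have "P (Suc (Suc t)) = 2 * cheb_arg l * P (Suc t) - P t" for t
    unfolding two_cheb_arg .
  then have "P (Suc t) = P 1 * cheb (cheb_arg l) (Suc t) - P 0 * cheb (cheb_arg l) t"
    by (rule cheb_linear_rec)
  moreover have "P 1 = q / l - 1" and "P 0 = 1"
    by (simp_all add: P_def alt_step_def numeral_2_eq_2)
  ultimately have "P (Suc t) = (q / l - 1) * cheb (cheb_arg l) (Suc t) - cheb (cheb_arg l) t"
    by simp
  then have "(-1) ^ Suc t * alt_seq l q (2 * Suc t) =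
      (q / l - 1) * cheb (cheb_arg l) (Suc t) - cheb (cheb_arg l) t"
    unfolding P_def .
  moreover have "2 * t + 2 = 2 * Suc t"
    by simp
  ultimately show ?thesis
    by (simp add: algebra_simps)
qed

lemma eigenvalue_antireg_even_iff:
  assumes "l \<noteq> 0" and "l \<noteq> -1"
  shows "eigenvalue (antireg_adj (2*k+2)) l \<longleftrightarrow> even_char k l = 0"
  using eigenvalue_antireg_even_iff_alt_seq[OF assms] alt_seq_cheb[of l 1 k]
  by (simp add: even_char_def)

lemma odd_char_Suc_eq:
  assumes "l \<noteq> -1"
  shows "odd_char (Suc k) l =
    - ((1 - (l + 2) / (l + 1) / l) * cheb (cheb_arg l) (Suc k) + cheb (cheb_arg l) k)"
proof -
  have l1: "l + 1 \<noteq> 0"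
    using assms by simp
  have "(l + 2) / (l + 1) / l = ((l + 1) + 1) / (l * (l + 1))"
    by (simp add: mult.commute add.assoc)
  also have "\<dots> = (l + 1) / (l * (l + 1)) + 1 / (l * (l + 1))"
    by (rule add_divide_distrib)
  also have "(l + 1) / (l * (l + 1)) = 1 / l"
    using l1 by simp
  finally have c: "2 * cheb_arg l + 1 + 1 / l = (l + 2) / (l + 1) / l - 1"
    unfolding two_cheb_arg by simp
  have "odd_char (Suc k) l =
      (2 * cheb_arg l + 1 + 1 / l) * cheb (cheb_arg l) (Suc k) - cheb (cheb_arg l) k"
    by (simp add: odd_char_def algebra_simps)
  then show ?thesis
    unfolding c by (simp add: left_diff_distrib)
qed

lemma eigenvalue_antireg_odd_iff:
  assumes "1 \<le> k" and "l \<noteq> 0" and "l \<noteq> -1"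
  shows "eigenvalue (antireg_adj (2*k+1)) l \<longleftrightarrow> odd_char k l = 0"
proof -
  obtain j where k: "k = Suc j"
    using assms(1) by (cases k) auto
  define X where "X = (1 - (l + 2) / (l + 1) / l) * cheb (cheb_arg l) (Suc j) + cheb (cheb_arg l) j"
  have "2 * k + 1 = 2 * j + 3"
    using k by simp
  then have "eigenvalue (antireg_adj (2*k+1)) l \<longleftrightarrow> (-1) ^ j * X = 0"
    using eigenvalue_antireg_odd_iff_alt_seq[OF assms(2,3), of j]
      alt_seq_cheb[of l "(l + 2) / (l + 1)" j]
    unfolding X_def by (simp only:)
  also have "\<dots> \<longleftrightarrow> odd_char k l = 0"
    using odd_char_Suc_eq[OF assms(3), of j, folded X_def] by (simp add: k)
  finally show ?thesis .
qed

lemma even_char_eq: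
  assumes "l \<noteq> 0"
  shows "even_char k l = (1 - 1 / l) * odd_char k l + cheb (cheb_arg l) k / l\<^sup>2"
  using assms by (simp add: even_char_def odd_char_def field_simps power2_eq_square)

lemma continuous_on_cheb_arg:
  assumes "0 \<notin> S" and "-1 \<notin> S"
  shows "continuous_on S cheb_arg"
  unfolding cheb_arg_def[abs_def] using assms
  by (intro continuous_intros) (auto simp: add_eq_0_iff)

lemma continuous_on_odd_char:
  assumes "0 \<notin> S" and "-1 \<notin> S"
  shows "continuous_on S (odd_char k)"
  unfolding odd_char_def[abs_def] using assms
  by (intro continuous_intros continuous_on_cheb continuous_on_cheb_arg) auto

lemma continuous_on_even_char:
  assumes "0 \<notin> S" and "-1 \<notin> S"
  shows "continuous_on S (even_char k)"
  unfolding even_char_def[abs_def] using assms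
  by (intro continuous_intros continuous_on_cheb continuous_on_cheb_arg) auto

section \<open>Interlacing of the extreme eigenvalues\<close>

lemma cheb_arg_reflect: "cheb_arg (-1 - l) = cheb_arg l"
  unfolding cheb_arg_def by (simp add: algebra_simps)

lemma cheb_arg_strict_antimono:
  assumes "0 < a" and "a < b"
  shows "cheb_arg b < cheb_arg a"
proof -
  have "a * (a + 1) < b * (b + 1)"
    using assms by (intro mult_strict_mono) auto
  moreover have "0 < a * (a + 1)"
    using assms by simp
  ultimately have "1 / (2 * (b * (b + 1))) < 1 / (2 * (a * (a + 1)))"
    by (simp add: frac_less2)
  then show ?thesis
    by (simp add: cheb_arg_def mult.assoc)
qed

lemma cheb_arg_surj:
  assumes "-1 < y"
  obtains l where "0 < l" and "cheb_arg l = y"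
proof
  define s where "s = sqrt (1 + 2 / (1 + y))"
  define l where "l = (s - 1) / 2"
  have "1 < 1 + 2 / (1 + y)"
    using assms by simp
  then have s: "1 < s" "s\<^sup>2 = 1 + 2 / (1 + y)"
    by (simp_all add: s_def)
  show "0 < l"
    using s by (simp add: l_def)
  have "l * (l + 1) = (s\<^sup>2 - 1) / 4"
    by (simp add: l_def field_simps power2_eq_square)
  also have "\<dots> = 1 / (2 * (1 + y))"
    using s(2) assms by (simp add: field_simps)
  finally have prod: "l * (l + 1) = 1 / (2 * (1 + y))" .
  have "cheb_arg l = 1 / (2 * (l * (l + 1))) - 1"
    by (simp add: cheb_arg_def mult.assoc)
  also have "\<dots> = y"
    unfolding prod using assms by (simp add: field_simps)
  finally show "cheb_arg l = y" .
qed

lemma one_le_cheb_arg: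
  assumes "0 < l" and "l \<le> 1/5"
  shows "1 \<le> cheb_arg l"
proof -
  have "l * (l + 1) \<le> 1/5 * (1/5 + 1)"
    using assms by (intro mult_mono) auto
  then have "2 * (2 * l * (l + 1)) \<le> 1"
    by simp
  moreover have "0 < 2 * l * (l + 1)"
    using assms(1) by simp
  ultimately show ?thesis
    by (simp add: cheb_arg_def le_divide_eq)
qed

lemma odd_char_pos:
  assumes "1 \<le> cheb_arg l" and "0 \<le> 1 + 1 / l"
  shows "0 < odd_char k l"
proof -
  have "0 < cheb (cheb_arg l) (Suc k)" and "0 \<le> cheb (cheb_arg l) k"
    using cheb_growth[OF assms(1), of k] cheb_growth[OF assms(1), of "Suc k"] by linarith+
  then show ?thesis
    using assms(2) by (simp add: odd_char_def add_pos_nonneg)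
qed

lemma odd_char_pos_right:
  assumes "0 < l" and "l \<le> 1/5"
  shows "0 < odd_char k l"
  using assms by (intro odd_char_pos one_le_cheb_arg) auto

lemma odd_char_pos_left:
  assumes "-6/5 \<le> l" and "l < -1"
  shows "0 < odd_char k l"
proof (rule odd_char_pos)
  show "1 \<le> cheb_arg l"
    using one_le_cheb_arg[of "-1 - l"] assms by (simp add: cheb_arg_reflect)
  show "0 \<le> 1 + 1 / l"
    using assms(2) by (simp add: field_simps)
qed

lemma even_char_fifth_neg: "even_char k (1/5) < 0"
proof -
  have "1 \<le> cheb_arg (1/5)"
    by (rule one_le_cheb_arg) auto
  from cheb_growth[OF this, of k] cheb_growth[OF this, of "Suc k"] show ?thesis
    by (simp add: even_char_def)
qed

lemma even_char_pos:
  assumes "l \<noteq> 0" and "0 \<le> (1 - 1 / l) * odd_char k l" and "0 < cheb (cheb_arg l) k"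
  shows "0 < even_char k l"
  using assms by (simp add: even_char_eq add_nonneg_pos)

(* For k \<ge> 2, l0 is where cheb_arg meets cos (pi/k), the largest zero of U_(k-1). *)
lemma antireg_window:
  assumes "1 \<le> k"
  obtains l0 where "0 < l0" and "odd_char k l0 < 0" and "odd_char k (-1 - l0) < 0"
    and "even_char k (-1 - l0) < 0"
    and "\<And>l. 0 < l \<and> l < l0 \<or> -1 - l0 < l \<and> l < -1 \<Longrightarrow> 0 < cheb (cheb_arg l) k"
proof -
  obtain l0 where l0: "0 < l0" "odd_char k l0 < 0" "odd_char k (-1 - l0) < 0"
    "even_char k (-1 - l0) < 0" and pos: "\<And>l. 0 < l \<Longrightarrow> l < l0 \<Longrightarrow> 0 < cheb (cheb_arg l) k"
  proof (cases "k = 1")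
    case True
    have "cheb_arg 2 = -11/12" and "cheb_arg (-3) = -11/12"
      by (simp_all add: cheb_arg_def)
    then show ?thesis
      using True by (intro that[of 2]) (simp_all add: odd_char_def even_char_def numeral_2_eq_2)
  next
    case False
    then have k: "2 \<le> k"
      using assms by simp
    let ?y = "cos (pi / real k)"
    have "0 < pi / real k" and "pi / real k < pi"
      using k by (auto simp: field_simps)
    then have "-1 < ?y"
      using cos_monotone_0_pi[of "pi / real k" pi] by auto
    then obtain l0 where l0: "0 < l0" "cheb_arg l0 = ?y"
      by (rule cheb_arg_surj)
    have "cheb_arg (-1 - l0) = ?y"
      using l0(2) by (simp add: cheb_arg_reflect)
    moreover have "0 < 1 - 1 / (-1 - l0)"
      using l0(1) by (simp add: field_simps)
    moreover have "0 < cheb (cheb_arg l) k" if "0 < l" "l < l0" for l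
      using cheb_pos[of k "cheb_arg l"] cheb_arg_strict_antimono[OF that] l0(2) k by simp
    ultimately show ?thesis
      using cheb_cos_pi_div[OF k] l0
      by (intro that[of l0]) (simp_all add: odd_char_def even_char_def)
  qed
  moreover have "0 < cheb (cheb_arg l) k" if "-1 - l0 < l" "l < -1" for l
    using pos[of "-1 - l"] that by (simp add: cheb_arg_reflect)
  ultimately show ?thesis
    using that by blast
qed

lemma odd_char_pos_below_roots:
  assumes "y < -1" and "\<And>z. y \<le> z \<Longrightarrow> z < -1 \<Longrightarrow> odd_char k z \<noteq> 0"
  shows "0 < odd_char k y"
proof (cases "-6/5 \<le> y")
  case True
  then show ?thesis
    using odd_char_pos_left assms(1) by blast
next
  case False
  show ?thesis
  proof (rule ccontr)
    assume "\<not> 0 < odd_char k y"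
    moreover have "continuous_on {y..-6/5} (odd_char k)"
      by (rule continuous_on_odd_char) auto
    ultimately have "\<exists>z. y \<le> z \<and> z \<le> -6/5 \<and> odd_char k z = 0"
      using False odd_char_pos_left[of "-6/5" k] by (intro IVT') auto
    then show False
      using assms(2) by force
  qed
qed

lemma even_char_pos_below_roots:
  assumes "y < -1" and "\<And>z. y \<le> z \<Longrightarrow> z < -1 \<Longrightarrow> odd_char k z \<noteq> 0"
    and "0 < cheb (cheb_arg y) k"
  shows "0 < even_char k y"
proof (rule even_char_pos)
  have "0 < 1 - 1 / y"
    using assms(1) by (simp add: field_simps)
  then show "0 \<le> (1 - 1 / y) * odd_char k y"
    using odd_char_pos_below_roots[OF assms(1,2)] by simp
qed (use assms in auto)

lemma mu_plus_antireg_le: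
  assumes "1 \<le> k"
  shows "mu_plus (antireg_adj (2*k+2)) \<le> mu_plus (antireg_adj (2*k+1))"
proof -
  obtain l0 where l0: "0 < l0" "odd_char k l0 < 0" "odd_char k (-1 - l0) < 0"
    "even_char k (-1 - l0) < 0"
    and window: "\<And>l. 0 < l \<and> l < l0 \<or> -1 - l0 < l \<and> l < -1 \<Longrightarrow> 0 < cheb (cheb_arg l) k"
    using antireg_window[OF assms] by blast
  define S where "S n = {x. eigenvalue (antireg_adj n) x \<and> x > 0}" for n
  have S_odd: "x \<in> S (2*k+1) \<longleftrightarrow> 0 < x \<and> odd_char k x = 0" for x
    using eigenvalue_antireg_odd_iff[OF assms, of x] by (auto simp: S_def)
  have S_even: "x \<in> S (2*k+2) \<longleftrightarrow> 0 < x \<and> even_char k x = 0" for x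
    using eigenvalue_antireg_even_iff[of x k] by (auto simp: S_def)
  have fin: "finite (S n)" for n
    unfolding S_def using finite_eigenvalues_antireg by (rule finite_Collect_conjI [OF disjI1])
  have "1/5 < l0"
    using odd_char_pos_right[of l0 k] l0 by (cases "l0 \<le> 1/5") auto
  moreover have "continuous_on {1/5..l0} (odd_char k)"
    by (rule continuous_on_odd_char) auto
  ultimately have "\<exists>r. 1/5 \<le> r \<and> r \<le> l0 \<and> odd_char k r = 0"
    using l0(2) odd_char_pos_right[of "1/5" k] by (intro IVT2') auto
  then obtain r where r: "r \<le> l0" "r \<in> S (2*k+1)"
    using S_odd by auto
  define \<theta> where "\<theta> = Min (S (2*k+1))"
  have "\<theta> \<in> S (2*k+1)" and "\<theta> \<le> r"
    unfolding \<theta>_def using fin r(2) by (auto intro: Min_in)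
  then have \<theta>: "0 < \<theta>" "odd_char k \<theta> = 0"
    using S_odd by auto
  have "\<theta> < l0"
    using order_trans[OF \<open>\<theta> \<le> r\<close> r(1)] \<theta>(2) l0(2) by (auto simp: less_le)
  have "1/5 < \<theta>"
    using odd_char_pos_right[of \<theta> k] \<theta> by (cases "\<theta> \<le> 1/5") auto
  have "0 < even_char k \<theta>"
    using \<theta> \<open>\<theta> < l0\<close> by (intro even_char_pos window) auto
  moreover have "continuous_on {1/5..\<theta>} (even_char k)"
    using \<open>1/5 < \<theta>\<close> by (intro continuous_on_even_char) auto
  ultimately have "\<exists>r'. 1/5 \<le> r' \<and> r' \<le> \<theta> \<and> even_char k r' = 0"
    using even_char_fifth_neg[of k] \<open>1/5 < \<theta>\<close> by (intro IVT') auto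
  then obtain r' where "r' \<le> \<theta>" "r' \<in> S (2*k+2)"
    using S_even by auto
  then have "Min (S (2*k+2)) \<le> \<theta>"
    using fin by (meson Min_le order_trans)
  then show ?thesis
    by (simp add: mu_plus_def \<theta>_def S_def)
qed

lemma mu_minus_antireg_le:
  assumes "1 \<le> k"
  shows "mu_minus (antireg_adj (2*k+2)) \<le> mu_minus (antireg_adj (2*k+1))"
proof -
  obtain l0 where l0: "0 < l0" "odd_char k l0 < 0" "odd_char k (-1 - l0) < 0"
    "even_char k (-1 - l0) < 0"
    and window: "\<And>l. 0 < l \<and> l < l0 \<or> -1 - l0 < l \<and> l < -1 \<Longrightarrow> 0 < cheb (cheb_arg l) k"
    using antireg_window[OF assms] by blast
  define a where "a = -1 - l0"
  define S where "S n = {x. eigenvalue (antireg_adj n) x \<and> x < -1}" for n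
  have S_odd: "x \<in> S (2*k+1) \<longleftrightarrow> x < -1 \<and> odd_char k x = 0" for x
    using eigenvalue_antireg_odd_iff[OF assms, of x] by (auto simp: S_def)
  have S_even: "x \<in> S (2*k+2) \<longleftrightarrow> x < -1 \<and> even_char k x = 0" for x
    using eigenvalue_antireg_even_iff[of x k] by (auto simp: S_def)
  have fin: "finite (S n)" for n
    unfolding S_def using finite_eigenvalues_antireg by (rule finite_Collect_conjI [OF disjI1])
  have "a < -1" and "\<not> 0 < odd_char k a"
    using l0(1,3) by (simp_all add: a_def)
  then obtain q where "a \<le> q" "q < -1" "odd_char k q = 0"
    using odd_char_pos_below_roots[of a k] by blast
  then have q: "a \<le> q" "q \<in> S (2*k+1)"
    using S_odd by auto
  define \<eta> where "\<eta> = Max (S (2*k+1))"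
  have "\<eta> \<in> S (2*k+1)" and "q \<le> \<eta>"
    unfolding \<eta>_def using fin q(2) by (auto intro: Max_in)
  then have \<eta>: "\<eta> < -1" "odd_char k \<eta> = 0"
    using S_odd by auto
  have "a < \<eta>"
    using order_trans[OF q(1) \<open>q \<le> \<eta>\<close>] \<eta>(2) l0(3) by (auto simp: a_def less_le)
  have "0 < even_char k \<eta>"
    using \<eta> \<open>a < \<eta>\<close> by (intro even_char_pos window) (auto simp: a_def)
  moreover have "continuous_on {a..\<eta>} (even_char k)"
    using \<eta>(1) by (intro continuous_on_even_char) auto
  ultimately have "\<exists>q'. a \<le> q' \<and> q' \<le> \<eta> \<and> even_char k q' = 0"
    using l0(4) \<open>a < \<eta>\<close> by (intro IVT') (auto simp: a_def)
  then have "S (2*k+2) \<noteq> {}"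
    using \<eta>(1) S_even by force
  moreover have "y \<le> \<eta>" if "y \<in> S (2*k+2)" for y
  proof (rule ccontr)
    assume "\<not> y \<le> \<eta>"
    then have y: "\<eta> < y" "y < -1" "even_char k y = 0"
      using that S_even by auto
    have no_root: "odd_char k z \<noteq> 0" if "y \<le> z" "z < -1" for z
    proof
      assume "odd_char k z = 0"
      then have "z \<le> \<eta>"
        using that(2) fin S_odd by (auto simp: \<eta>_def)
      with that(1) y(1) show False
        by simp
    qed
    have "0 < cheb (cheb_arg y) k"
      using y(1,2) \<open>a < \<eta>\<close> by (intro window) (auto simp: a_def)
    with y(2) no_root have "0 < even_char k y"
      by (rule even_char_pos_below_roots)
    with y(3) show False
      by simp
  qed
  ultimately have "Max (S (2*k+2)) \<le> \<eta>"
    using fin by simp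
  then show ?thesis
    by (simp add: mu_minus_def \<eta>_def S_def)
qed

theorem proposition2p1:
  fixes n :: nat
  assumes "odd n" and "n \<ge> 3"
  shows "mu_minus (antireg_adj (n+1)) \<le> mu_minus (antireg_adj n)
     \<and> mu_plus (antireg_adj (n+1)) \<le> mu_plus (antireg_adj n)"
proof -
  define k where "k = n div 2"
  have n: "n = 2*k+1"
    using assms(1) by (simp add: k_def)
  have k: "1 \<le> k" and n1: "n + 1 = 2*k+2"
    using assms(2) n by linarith+
  show ?thesis
    unfolding n1 using mu_minus_antireg_le[OF k] mu_plus_antireg_le[OF k] by (simp only: n)
qed

end
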